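(* Let $b$ be a Blaschke product with zeros $(a_n)_{n\ge1}$ (with multiplicity), $\Omega$ an approach region at $1$ and $m\ge0$ an integer, and assume $\sup_{z\in\Omega}\sum_n\frac{1-|a_n|^2}{|1-\overline{a_n}z|^{2m+2}}<\infty$. For integers $0\le k,l\le m$ and $z\in\Omega\cup\{1\}$ define the sequence $A_{k,l,z}=(A_{k,l,z}(n))_{n\ge1}$ by \[A_{k,l,z}(n)=\frac{1-|a_n|^2}{(1-\overline{a_n}z)^{1+k}(1-a_n\overline{z})^{1+l}}.\] Then for $k+l<2m$, $\lim_{z\to1,\,z\in\Omega}\|A_{k,l,z}-A_{k,l,1}\|_{\ell^1}=0$.
   Context: $\|x\|_{\ell^1}=\sum_n|x(n)|$. An approach region at $1$ is an open simply connected $\Omega\subset\mathbb{D}$ (unit disk) with $\partial\Omega\cap\mathbb{T}=\{1\}$ such that for $z\in\Omega$ close to $1$ the segment $[z,1]\subset\Omega$. *)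

theory Defs
  imports "HOL-Analysis.Analysis"
begin

text \<open>Zero sequence of a Blaschke product, indexed by a set I of naturals
 (I finite for finite Blaschke products, infinite otherwise): all zeros lie
 in the open unit disc and satisfy the Blaschke condition.\<close>
definition blaschke_zeros :: "nat set \<Rightarrow> (nat \<Rightarrow> complex) \<Rightarrow> bool" where
  "blaschke_zeros I a \<longleftrightarrow> (\<forall>n\<in>I. norm (a n) < 1) \<and> (\<lambda>n. 1 - norm (a n)) summable_on I"

text \<open>Approach region at 1.  Since 1 is not in the disc, the segment [z,1]
 is required to lie in Omega except for its endpoint 1.\<close>
definition approach_region :: "complex set \<Rightarrow> bool" where
  "approach_region \<Omega> \<longleftrightarrow> open \<Omega> \<and> simply_connected \<Omega> \<and> \<Omega> \<subseteq> ball 0 1 \<and>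
     frontier \<Omega> \<inter> sphere 0 1 = {1} \<and>
     (\<exists>\<delta>>0. \<forall>z\<in>\<Omega>. dist z 1 < \<delta> \<longrightarrow> closed_segment z 1 - {1} \<subseteq> \<Omega>)"

definition Aseq :: "(nat \<Rightarrow> complex) \<Rightarrow> nat \<Rightarrow> nat \<Rightarrow> complex \<Rightarrow> nat \<Rightarrow> complex" where
  "Aseq a k l z n = (1 - (norm (a n))\<^sup>2) /
     ((1 - cnj (a n) * z) ^ (1 + k) * (1 - a n * cnj z) ^ (1 + l))"

end

theory Submission
  imports Defs
begin

text \<open>Write w_n = 1 - |a_n|^2 and d_n(z) = |1 - conj(a_n) z|, so that
  |A_{k,l,z}(n)| = w_n / d_n(z)^j with 0 < j = k + l + 2 < 2m + 2.  Interpolating between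
  the exponents 0 and 2m + 2 gives, for every 0 < \<delta> \<le> 1,
  w_n / d_n(z)^j \<le> \<delta> w_n / d_n(z)^(2m+2) + \<delta>^(-j) w_n.
  Summed over n, the first term is at most \<delta> C uniformly for z in \<Omega> and, by Fatou's
  lemma, also for z = 1; the second one has arbitrarily small tails by the Blaschke
  condition.  So the tails of A_{k,l,z} - A_{k,l,1} are uniformly small, while on the
  finitely many remaining indices the convergence is pointwise.\<close>

lemma divide_power_le_interpolate:
  fixes w d \<delta> :: real
  assumes "0 \<le> w" "0 \<le> d" "0 < \<delta>" "\<delta> \<le> 1" "0 < j" "j < p"
  shows "w / d ^ j \<le> \<delta> * (w / d ^ p) + w / \<delta> ^ j"
proof (cases "d < \<delta>")
  case True
  have "d ^ p = d ^ j * d ^ (p - j)"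
    using \<open>j < p\<close> by (simp flip: power_add)
  then have "w / d ^ j = (w / d ^ p) * d ^ (p - j)"
    using \<open>0 < j\<close> \<open>j < p\<close> by (cases "d = 0") auto
  also have "\<dots> \<le> (w / d ^ p) * \<delta>"
  proof (rule mult_left_mono)
    have "d ^ (p - j) \<le> d ^ 1"
      using assms True by (intro power_decreasing) auto
    then show "d ^ (p - j) \<le> \<delta>" using True by simp
  qed (use assms in simp)
  finally have "w / d ^ j \<le> \<delta> * (w / d ^ p)"
    by (simp only: mult.commute)
  moreover have "0 \<le> w / \<delta> ^ j"
    using assms by simp
  ultimately show ?thesis by linarith
next
  case False
  then have "w / d ^ j \<le> w / \<delta> ^ j"
    using assms by (intro divide_left_mono power_mono) auto
  moreover have "0 \<le> \<delta> * (w / d ^ p)"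
    using assms by simp
  ultimately show ?thesis by linarith
qed

lemma fatou_summable_on:
  fixes f :: "'a \<Rightarrow> 'b \<Rightarrow> real"
  assumes "F \<noteq> bot"
    and lim: "\<And>n. n \<in> I \<Longrightarrow> ((\<lambda>z. f z n) \<longlongrightarrow> g n) F"
    and bounded: "\<forall>\<^sub>F z in F. f z summable_on I \<and> infsum (f z) I \<le> C"
    and nonneg: "\<And>z n. n \<in> I \<Longrightarrow> 0 \<le> f z n"
  shows "g summable_on I \<and> infsum g I \<le> C"
proof -
  have finite_sums: "sum g S \<le> C" if "finite S" "S \<subseteq> I" for S
  proof (rule tendsto_upperbound[OF _ _ \<open>F \<noteq> bot\<close>])
    show "((\<lambda>z. sum (f z) S) \<longlongrightarrow> sum g S) F"
      using that lim by (intro tendsto_sum) auto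
    show "\<forall>\<^sub>F z in F. sum (f z) S \<le> C"
      using bounded
    proof eventually_elim
      case (elim z)
      have "sum (f z) S \<le> infsum (f z) I"
        using elim that nonneg by (intro finite_sum_le_infsum) auto
      with elim show ?case by linarith
    qed
  qed
  have g_nonneg: "0 \<le> g n" if "n \<in> I" for n
    using tendsto_lowerbound[OF lim[OF that] _ \<open>F \<noteq> bot\<close>] nonneg that by auto
  have "g summable_on I"
    using g_nonneg finite_sums
    by (intro nonneg_bdd_above_summable_on bdd_aboveI2[where M = C]) auto
  then show ?thesis
    using finite_sums infsum_le_finite_sums by blast
qed

lemma summable_on_small_tail:
  fixes w :: "'b \<Rightarrow> real"
  assumes "w summable_on I" "0 < \<epsilon>"
  obtains S where "finite S" "S \<subseteq> I" "infsum w (I - S) \<le> \<epsilon>"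
proof -
  obtain S where S: "finite S" "S \<subseteq> I" "dist (sum w S) (infsum w I) \<le> \<epsilon>"
    using infsum_finite_approximation[OF assms] by blast
  have "infsum w (I - S) = infsum w I - sum w S"
    using S assms(1) by (simp add: infsum_Diff)
  then show ?thesis
    using S that by (simp add: dist_real_def)
qed

lemma tendsto_infsum_zero_if_tight:
  fixes B :: "'a \<Rightarrow> 'b \<Rightarrow> real"
  assumes nonneg: "\<And>z n. n \<in> I \<Longrightarrow> 0 \<le> B z n"
    and lim: "\<And>n. n \<in> I \<Longrightarrow> ((\<lambda>z. B z n) \<longlongrightarrow> 0) F"
    and summable: "\<forall>\<^sub>F z in F. B z summable_on I"
    and tight: "\<And>\<epsilon>. 0 < \<epsilon> \<Longrightarrow>
      \<exists>S. finite S \<and> S \<subseteq> I \<and> (\<forall>\<^sub>F z in F. infsum (B z) (I - S) \<le> \<epsilon>)"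
  shows "((\<lambda>z. infsum (B z) I) \<longlongrightarrow> 0) F"
proof (rule tendstoI)
  fix \<epsilon> :: real
  assume "0 < \<epsilon>"
  then obtain S where S: "finite S" "S \<subseteq> I"
    and tail: "\<forall>\<^sub>F z in F. infsum (B z) (I - S) \<le> \<epsilon> / 2"
    using tight[of "\<epsilon> / 2"] by auto
  have "((\<lambda>z. sum (B z) S) \<longlongrightarrow> 0) F"
    using S lim by (intro tendsto_null_sum) auto
  then have head: "\<forall>\<^sub>F z in F. sum (B z) S < \<epsilon> / 2"
    using \<open>0 < \<epsilon>\<close> by (auto dest: order_tendstoD(2)[where a = "\<epsilon> / 2"])
  show "\<forall>\<^sub>F z in F. dist (infsum (B z) I) 0 < \<epsilon>"
    using summable head tail
  proof eventually_elim
    case (elim z)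
    have "infsum (B z) (I - S) = infsum (B z) I - sum (B z) S"
      using S elim(1) by (simp add: infsum_Diff)
    moreover have "0 \<le> infsum (B z) I"
      using nonneg by (simp add: infsum_nonneg)
    ultimately show ?case
      using elim by simp
  qed
qed

lemma infsum_le_interpolation_bound:
  fixes B H w :: "'b \<Rightarrow> real"
  assumes "J \<subseteq> I" "0 \<le> \<delta>" "0 \<le> c"
    and "\<And>n. n \<in> I \<Longrightarrow> 0 \<le> B n" "\<And>n. n \<in> I \<Longrightarrow> 0 \<le> H n"
    and "\<And>n. n \<in> I \<Longrightarrow> B n \<le> \<delta> * H n + c * w n"
    and "H summable_on I" "infsum H I \<le> C" "w summable_on I"
  shows "B summable_on J \<and> infsum B J \<le> \<delta> * C + c * infsum w J"
proof -
  have HJ: "H summable_on J" and wJ: "w summable_on J"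
    using assms summable_on_subset by blast+
  then have bound_summable: "(\<lambda>n. \<delta> * H n + c * w n) summable_on J"
    by (intro summable_on_add summable_on_cmult_right)
  have BJ: "B summable_on J"
    by (rule summable_on_comparison_test[OF bound_summable]) (use assms in auto)
  have "infsum B J \<le> infsum (\<lambda>n. \<delta> * H n + c * w n) J"
    using BJ bound_summable by (rule infsum_mono) (use assms in auto)
  also have "\<dots> = \<delta> * infsum H J + c * infsum w J"
    using HJ wJ
    by (simp add: infsum_add[OF summable_on_cmult_right summable_on_cmult_right]
        infsum_cmult_right')
  also have "\<dots> \<le> \<delta> * C + c * infsum w J"
  proof -
    have "infsum H J \<le> infsum H I"
      using assms HJ by (intro infsum_mono_neutral) auto
    then show ?thesis
      using \<open>0 \<le> \<delta>\<close> \<open>infsum H I \<le> C\<close> by (simp add: mult_left_mono)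
  qed
  finally show ?thesis
    using BJ by simp
qed

lemma uniformly_small_tails_if_interpolation_bound:
  fixes B H :: "'a \<Rightarrow> 'b \<Rightarrow> real" and w :: "'b \<Rightarrow> real"
  assumes "\<And>z n. n \<in> I \<Longrightarrow> 0 \<le> B z n" "\<And>z n. n \<in> I \<Longrightarrow> 0 \<le> H z n"
    and H_bounded: "\<forall>\<^sub>F z in F. H z summable_on I \<and> infsum (H z) I \<le> C"
    and "w summable_on I"
    and bound: "\<And>\<delta>. 0 < \<delta> \<Longrightarrow> \<delta> \<le> 1 \<Longrightarrow>
      \<exists>c\<ge>0. \<forall>z. \<forall>n\<in>I. B z n \<le> \<delta> * H z n + c * w n"
    and "0 < \<epsilon>"
  shows "\<exists>S. finite S \<and> S \<subseteq> I \<and> (\<forall>\<^sub>F z in F. infsum (B z) (I - S) \<le> \<epsilon>)"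
proof -
  define \<delta> where "\<delta> = min 1 (\<epsilon> / (2 * (\<bar>C\<bar> + 1)))"
  have \<delta>: "0 < \<delta>" "\<delta> \<le> 1"
    using \<open>0 < \<epsilon>\<close> by (simp_all add: \<delta>_def)
  have "\<delta> * C \<le> \<delta> * (\<bar>C\<bar> + 1)"
    using \<delta> by (intro mult_left_mono) auto
  also have "\<dots> \<le> \<epsilon> / 2"
  proof -
    have "\<delta> \<le> \<epsilon> / (2 * (\<bar>C\<bar> + 1))"
      by (simp add: \<delta>_def)
    then show ?thesis
      by (simp add: field_simps add_pos_nonneg)
  qed
  finally have \<delta>C: "\<delta> * C \<le> \<epsilon> / 2" .
  obtain c where c: "0 \<le> c" "\<forall>z. \<forall>n\<in>I. B z n \<le> \<delta> * H z n + c * w n"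
    using bound \<delta> by blast
  define \<eta> where "\<eta> = \<epsilon> / (2 * (c + 1))"
  have "0 < \<eta>"
    using \<open>0 < \<epsilon>\<close> c by (simp add: \<eta>_def)
  then obtain S where S: "finite S" "S \<subseteq> I" "infsum w (I - S) \<le> \<eta>"
    using summable_on_small_tail[OF \<open>w summable_on I\<close>] by blast
  have "c * infsum w (I - S) \<le> c * \<eta>"
    using S c by (intro mult_left_mono) auto
  also have "\<dots> \<le> (c + 1) * \<eta>"
    using \<open>0 < \<eta>\<close> by (simp add: distrib_right)
  also have "\<dots> = \<epsilon> / 2"
    using c by (simp add: \<eta>_def field_simps)
  finally have w_tail: "c * infsum w (I - S) \<le> \<epsilon> / 2" .
  have "\<forall>\<^sub>F z in F. infsum (B z) (I - S) \<le> \<epsilon>"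
    using H_bounded
  proof eventually_elim
    case (elim z)
    then have "infsum (B z) (I - S) \<le> \<delta> * C + c * infsum w (I - S)"
      using infsum_le_interpolation_bound[of "I - S" I \<delta> c "B z" "H z" w C] assms S \<delta> c
      by auto
    with \<delta>C w_tail show ?case by linarith
  qed
  with S show ?thesis by blast
qed

lemma tendsto_infsum_zero_if_interpolation_bound:
  fixes B H :: "'a \<Rightarrow> 'b \<Rightarrow> real" and w :: "'b \<Rightarrow> real"
  assumes B_nonneg: "\<And>z n. n \<in> I \<Longrightarrow> 0 \<le> B z n"
    and B_lim: "\<And>n. n \<in> I \<Longrightarrow> ((\<lambda>z. B z n) \<longlongrightarrow> 0) F"
    and H_nonneg: "\<And>z n. n \<in> I \<Longrightarrow> 0 \<le> H z n"
    and H_bounded: "\<forall>\<^sub>F z in F. H z summable_on I \<and> infsum (H z) I \<le> C"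
    and "w summable_on I"
    and bound: "\<And>\<delta>. 0 < \<delta> \<Longrightarrow> \<delta> \<le> 1 \<Longrightarrow>
      \<exists>c\<ge>0. \<forall>z. \<forall>n\<in>I. B z n \<le> \<delta> * H z n + c * w n"
  shows "(\<forall>\<^sub>F z in F. B z summable_on I) \<and> ((\<lambda>z. infsum (B z) I) \<longlongrightarrow> 0) F"
proof
  obtain c where c: "0 \<le> c" "\<forall>z. \<forall>n\<in>I. B z n \<le> 1 * H z n + c * w n"
    using bound[of 1] by auto
  show summable: "\<forall>\<^sub>F z in F. B z summable_on I"
    using H_bounded
  proof eventually_elim
    case (elim z)
    then show ?case
      using infsum_le_interpolation_bound[of I I 1 c "B z" "H z" w C] assms c by auto
  qed
  show "((\<lambda>z. infsum (B z) I) \<longlongrightarrow> 0) F"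
    using uniformly_small_tails_if_interpolation_bound[OF B_nonneg H_nonneg H_bounded
        \<open>w summable_on I\<close> bound]
    by (intro tendsto_infsum_zero_if_tight[OF B_nonneg B_lim summable]) auto
qed

definition blaschke_kernel :: "(nat \<Rightarrow> complex) \<Rightarrow> nat \<Rightarrow> complex \<Rightarrow> nat \<Rightarrow> real" where
  "blaschke_kernel a p z n = (1 - (norm (a n))\<^sup>2) / norm (1 - cnj (a n) * z) ^ p"

lemma blaschke_kernel_nonneg:
  assumes "norm (a n) \<le> 1"
  shows "0 \<le> blaschke_kernel a p z n"
  using assms by (simp add: blaschke_kernel_def power_le_one)

lemma isCont_blaschke_kernel:
  assumes "cnj (a n) * z \<noteq> 1"
  shows "isCont (\<lambda>z. blaschke_kernel a p z n) z"
  using assms unfolding blaschke_kernel_def by (intro continuous_intros) auto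

lemma isCont_Aseq:
  assumes "cnj (a n) * z \<noteq> 1"
  shows "isCont (\<lambda>z. Aseq a k l z n) z"
proof -
  have "1 - a n * cnj z \<noteq> 0"
    using assms
    by (metis complex_cnj_cnj complex_cnj_mult eq_iff_diff_eq_0 complex_cnj_one)
  then show ?thesis
    using assms unfolding Aseq_def by (intro continuous_intros) auto
qed

lemma norm_Aseq:
  assumes "norm (a n) \<le> 1"
  shows "norm (Aseq a k l z n) = blaschke_kernel a (k + l + 2) z n"
proof -
  define d where "d = norm (1 - cnj (a n) * z)"
  have "norm (1 - a n * cnj z) = d"
    unfolding d_def
    by (metis complex_cnj_cnj complex_cnj_diff complex_cnj_mult complex_cnj_one complex_mod_cnj)
  then have "norm ((1 - cnj (a n) * z) ^ (1 + k) * (1 - a n * cnj z) ^ (1 + l)) = d ^ (k + l + 2)"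
    by (simp add: norm_mult norm_power d_def flip: power_add)
  moreover have "norm (1 - (complex_of_real (norm (a n)))\<^sup>2) = 1 - (norm (a n))\<^sup>2"
  proof -
    have "1 - (complex_of_real (norm (a n)))\<^sup>2 = complex_of_real (1 - (norm (a n))\<^sup>2)"
      by simp
    moreover have "0 \<le> 1 - (norm (a n))\<^sup>2"
      using assms by (simp add: power_le_one)
    ultimately show ?thesis
      by (metis norm_of_real abs_of_nonneg)
  qed
  ultimately show ?thesis
    by (simp add: Aseq_def blaschke_kernel_def norm_divide d_def)
qed

lemma norm_Aseq_diff_le:
  assumes "norm (a n) \<le> 1" "0 < \<delta>" "\<delta> \<le> 1" "k + l + 2 < p"
  shows "norm (Aseq a k l z n - Aseq a k l z' n)
    \<le> \<delta> * (blaschke_kernel a p z n + blaschke_kernel a p z' n)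
      + 2 / \<delta> ^ (k + l + 2) * (1 - (norm (a n))\<^sup>2)"
proof -
  have w: "0 \<le> 1 - (norm (a n))\<^sup>2"
    using assms by (simp add: power_le_one)
  have interpolate: "blaschke_kernel a (k + l + 2) u n
      \<le> \<delta> * blaschke_kernel a p u n + (1 - (norm (a n))\<^sup>2) / \<delta> ^ (k + l + 2)" for u
    unfolding blaschke_kernel_def
    by (rule divide_power_le_interpolate) (use assms w in auto)
  have "norm (Aseq a k l z n - Aseq a k l z' n) \<le> norm (Aseq a k l z n) + norm (Aseq a k l z' n)"
    by (rule norm_triangle_ineq4)
  also have "\<dots> = blaschke_kernel a (k + l + 2) z n + blaschke_kernel a (k + l + 2) z' n"
    using assms by (simp add: norm_Aseq)
  also have "\<dots> \<le> (\<delta> * blaschke_kernel a p z n + (1 - (norm (a n))\<^sup>2) / \<delta> ^ (k + l + 2))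
      + (\<delta> * blaschke_kernel a p z' n + (1 - (norm (a n))\<^sup>2) / \<delta> ^ (k + l + 2))"
    by (intro add_mono interpolate)
  also have "\<dots> = \<delta> * (blaschke_kernel a p z n + blaschke_kernel a p z' n)
      + 2 / \<delta> ^ (k + l + 2) * (1 - (norm (a n))\<^sup>2)"
    by (simp only: times_divide_eq_left distrib_left mult_2 add_divide_distrib add_ac)
  finally show ?thesis .
qed

lemma blaschke_weight_summable:
  assumes "blaschke_zeros I a"
  shows "(\<lambda>n. 1 - (norm (a n))\<^sup>2) summable_on I"
proof (rule summable_on_comparison_test)
  show "(\<lambda>n. 2 * (1 - norm (a n))) summable_on I"
    using assms unfolding blaschke_zeros_def by (intro summable_on_cmult_right) auto
  fix n
  assume "n \<in> I"
  then have "norm (a n) < 1"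
    using assms by (simp add: blaschke_zeros_def)
  then show "0 \<le> 1 - (norm (a n))\<^sup>2"
    by (simp add: power_le_one)
  show "1 - (norm (a n))\<^sup>2 \<le> 2 * (1 - norm (a n))"
    using zero_le_power2[of "1 - norm (a n)"] by (simp add: power2_eq_square algebra_simps)
qed

lemma approach_region_at_1_nontrivial:
  assumes "approach_region \<Omega>"
  shows "at 1 within \<Omega> \<noteq> bot"
proof -
  have "\<Omega> \<subseteq> ball 0 1" "1 \<in> frontier \<Omega>"
    using assms unfolding approach_region_def by auto
  then have "\<Omega> - {1} = \<Omega>" "1 \<in> closure \<Omega>"
    by (auto simp: frontier_def)
  then have "1 islimpt \<Omega>"
    by (simp add: islimpt_in_closure)
  then show ?thesis
    by (simp add: trivial_limit_within)
qed

lemma blaschke_kernel_bounded_at_limit_point: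
  assumes "at z\<^sub>0 within \<Omega> \<noteq> bot"
    and "\<And>n. n \<in> I \<Longrightarrow> norm (a n) \<le> 1 \<and> cnj (a n) * z\<^sub>0 \<noteq> 1"
    and "\<forall>z\<in>\<Omega>. blaschke_kernel a p z summable_on I \<and> infsum (blaschke_kernel a p z) I \<le> C"
  shows "blaschke_kernel a p z\<^sub>0 summable_on I \<and> infsum (blaschke_kernel a p z\<^sub>0) I \<le> C"
proof (rule fatou_summable_on[OF assms(1)])
  show "((\<lambda>z. blaschke_kernel a p z n) \<longlongrightarrow> blaschke_kernel a p z\<^sub>0 n) (at z\<^sub>0 within \<Omega>)"
    if "n \<in> I" for n
    using assms(2)[OF that]
    by (intro isCont_tendsto_compose[OF isCont_blaschke_kernel tendsto_ident_at]) auto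
  show "\<forall>\<^sub>F z in at z\<^sub>0 within \<Omega>.
      blaschke_kernel a p z summable_on I \<and> infsum (blaschke_kernel a p z) I \<le> C"
    using assms(3) by (auto simp: eventually_at_filter)
qed (use assms(2) blaschke_kernel_nonneg in blast)

theorem mainTheorem11:
  fixes a :: "nat \<Rightarrow> complex" and I :: "nat set" and \<Omega> :: "complex set"
    and m k l :: nat
  assumes "blaschke_zeros I a"
    and "approach_region \<Omega>"
    and "\<exists>C. \<forall>z\<in>\<Omega>.
           (\<lambda>n. (1 - (norm (a n))\<^sup>2) / norm (1 - cnj (a n) * z) ^ (2*m+2)) summable_on I \<and>
           (\<Sum>\<^sub>\<infinity>n\<in>I. (1 - (norm (a n))\<^sup>2) / norm (1 - cnj (a n) * z) ^ (2*m+2)) \<le> C"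
    and "k \<le> m" and "l \<le> m" and "k + l < 2*m"
  shows "(\<forall>\<^sub>F z in at 1 within \<Omega>. (\<lambda>n. norm (Aseq a k l z n - Aseq a k l 1 n)) summable_on I)
         \<and> ((\<lambda>z. \<Sum>\<^sub>\<infinity>n\<in>I. norm (Aseq a k l z n - Aseq a k l 1 n)) \<longlongrightarrow> 0) (at 1 within \<Omega>)"
proof -
  define K where "K = blaschke_kernel a (2 * m + 2)"
  obtain C where C: "\<forall>z\<in>\<Omega>. K z summable_on I \<and> infsum (K z) I \<le> C"
    using assms(3) unfolding K_def blaschke_kernel_def by blast
  have a_in_disc: "norm (a n) \<le> 1" "cnj (a n) * 1 \<noteq> 1" if "n \<in> I" for n
    using assms(1) that unfolding blaschke_zeros_def by auto
  have K_1: "K 1 summable_on I \<and> infsum (K 1) I \<le> C"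
    using approach_region_at_1_nontrivial[OF assms(2)] a_in_disc C unfolding K_def
    by (intro blaschke_kernel_bounded_at_limit_point) auto
  have "\<forall>\<^sub>F z in at 1 within \<Omega>. z \<in> \<Omega>"
    by (simp add: eventually_at_filter)
  then have K_bounded: "\<forall>\<^sub>F z in at 1 within \<Omega>.
      (\<lambda>n. K z n + K 1 n) summable_on I \<and> infsum (\<lambda>n. K z n + K 1 n) I \<le> 2 * C"
  proof eventually_elim
    case (elim z)
    then have "K z summable_on I" "infsum (K z) I \<le> C"
      using C by auto
    then show ?case
      using K_1 by (simp add: summable_on_add infsum_add)
  qed
  show ?thesis
  proof (rule tendsto_infsum_zero_if_interpolation_bound[OF _ _ _ K_bounded
        blaschke_weight_summable[OF assms(1)]])
    show "((\<lambda>z. norm (Aseq a k l z n - Aseq a k l 1 n)) \<longlongrightarrow> 0) (at 1 within \<Omega>)"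
      if "n \<in> I" for n
      using isCont_Aseq[where a = a and n = n and k = k and l = l, OF a_in_disc(2)[OF that]]
      by (intro tendsto_norm_zero LIM_zero isCont_tendsto_compose[OF _ tendsto_ident_at])
    show "\<exists>c\<ge>0. \<forall>z. \<forall>n\<in>I. norm (Aseq a k l z n - Aseq a k l 1 n)
        \<le> \<delta> * (K z n + K 1 n) + c * (1 - (norm (a n))\<^sup>2)"
      if "0 < \<delta>" "\<delta> \<le> 1" for \<delta>
      using norm_Aseq_diff_le[OF _ that, where p = "2 * m + 2"] assms(6) a_in_disc \<open>0 < \<delta>\<close>
      unfolding K_def
      by (intro exI[of _ "2 / \<delta> ^ (k + l + 2)"]) auto
    show "0 \<le> K z n + K 1 n" if "n \<in> I" for z n
      unfolding K_def using a_in_disc[OF that]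
      by (intro add_nonneg_nonneg blaschke_kernel_nonneg)
  qed simp
qed

end
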